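(* Consider algorithm TRIEST-FD (described in the context) run with integer parameter $M\ge 6$ on a fully-dynamic edge stream. Let $t^*$ be the first time step $t\ge M+1$ such that $|E^{(t)}|=M+1$ ($t^*=+\infty$ if no such time step exists). Then $\rho^{(t)}=|\Delta^{(t)}|$ for all $t<t^*$, and $\mathbb{E}\left[\rho^{(t)}\right]=|\Delta^{(t)}|$ for all $t\ge t^*$.
   Context: A fully-dynamic edge stream: at each time step $t=1,2,\dots$ an element $(\bullet,\{u,v\})$ arrives with $\bullet\in\{+,-\}$ and $u\neq v$; starting from the empty graph, $E^{(t)}=E^{(t-1)}\cup\{\{u,v\}\}$ if $\bullet=+$ and $E^{(t)}=E^{(t-1)}\setminus\{\{u,v\}\}$ if $\bullet=-$, and every operation has effect (an insertion is only of an edge not in $E^{(t-1)}$, a deletion only of an edge in $E^{(t-1)}$); the order is arbitrary but independent of the algorithm's random bits. $G^{(t)}$ is the graph with edge set $E^{(t)}$, $s^{(t)}=|E^{(t)}|$, and $\Delta^{(t)}$ the set of triangles of $G^{(t)}$ (sets of three edges $\{\{u,v\},\{v,w\},\{w,u\}\}\subseteq E^{(t)}$ with $u,v,w$ distinct). TRIEST-FD (random pairing) keeps an edge sample $\mathcal{S}$ (initially empty), counters $d_{\mathrm i}=d_{\mathrm o}=0$, and a counter $\tau$ which, by incremental updates after each insertion into or removal from $\mathcal{S}$, always equals the number of triangles all of whose edges are in $\mathcal{S}$. On a deletion of edge $e$: if $e\in\mathcal{S}$, $e$ is removed from $\mathcal{S}$ and $d_{\mathrm i}$ is increased by $1$;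 otherwise $d_{\mathrm o}$ is increased by $1$. On an insertion of edge $e$: if $d_{\mathrm i}+d_{\mathrm o}=0$, then if $|\mathcal{S}|<M$, $e$ is inserted into $\mathcal{S}$; otherwise, with probability $M/s^{(t)}$, an edge chosen uniformly at random from $\mathcal{S}$ is removed and $e$ inserted, else $\mathcal{S}$ is unchanged. If $d_{\mathrm i}+d_{\mathrm o}>0$, then with probability $d_{\mathrm i}/(d_{\mathrm i}+d_{\mathrm o})$, $e$ is inserted into $\mathcal{S}$ and $d_{\mathrm i}$ is decreased by $1$; otherwise $e$ is not inserted and $d_{\mathrm o}$ is decreased by $1$. Let $M^{(t)}=|\mathcal{S}|$, $\tau^{(t)}$, $d_{\mathrm i}^{(t)}$, $d_{\mathrm o}^{(t)}$ be the values at the end of time step $t$, $\omega^{(t)}=\min\{M,s^{(t)}+d_{\mathrm i}^{(t)}+d_{\mathrm o}^{(t)}\}$, and \[ \kappa^{(t)}=1-\sum_{j=0}^{2}\binom{s^{(t)}}{j}\binom{d_{\mathrm i}^{(t)}+d_{\mathrm o}^{(t)}}{\omega^{(t)}-j}\Big/\binom{s^{(t)}+d_{\mathrm i}^{(t)}+d_{\mathrm o}^{(t)}}{\omega^{(t)}} \] (with $\binom{0}{0}=1$). For $a\le b\le c$, $\psi_{a,b,c}=\binom{c}{b}/\binom{c-a}{b-a}=\prod_{i=0}^{a-1}\frac{c-i}{b-i}$. The estimate is $\rho^{(t)}=0$ if $M^{(t)}<3$ and $\rho^{(t)}=\frac{\tau^{(t)}}{\kappa^{(t)}}\psi_{3,M^{(t)},s^{(t)}}$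 otherwise. *)

theory Defs
  imports "HOL-Probability.Probability"
begin

(* A stream element: (True, u, v) = insertion of {u,v}; (False, u, v) = deletion of {u,v}.
   The stream is a list; the element arriving at time step t (t >= 1) is  sigma ! (t - 1). *)
type_synonym 'v op = "bool \<times> 'v \<times> 'v"

definition op_edge :: "'v op \<Rightarrow> 'v set" where
  "op_edge x = {fst (snd x), snd (snd x)}"

primrec graph_at :: "'v op list \<Rightarrow> nat \<Rightarrow> 'v set set" where
  "graph_at \<sigma> 0 = {}"
| "graph_at \<sigma> (Suc t) =
     (if fst (\<sigma> ! t) then insert (op_edge (\<sigma> ! t)) (graph_at \<sigma> t)
      else graph_at \<sigma> t - {op_edge (\<sigma> ! t)})"

definition valid_stream :: "'v op list \<Rightarrow> bool" where
  "valid_stream \<sigma> \<longleftrightarrow>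
     (\<forall>t < length \<sigma>. fst (snd (\<sigma> ! t)) \<noteq> snd (snd (\<sigma> ! t)) \<and>
        (fst (\<sigma> ! t) \<longrightarrow> op_edge (\<sigma> ! t) \<notin> graph_at \<sigma> t) \<and>
        (\<not> fst (\<sigma> ! t) \<longrightarrow> op_edge (\<sigma> ! t) \<in> graph_at \<sigma> t))"

definition triangles :: "'v set set \<Rightarrow> 'v set set set" where
  "triangles E = {T. \<exists>u v w. u \<noteq> v \<and> v \<noteq> w \<and> w \<noteq> u \<and>
                      T = {{u, v}, {v, w}, {w, u}} \<and> T \<subseteq> E}"

(* algorithm state: (sample S, d_i, d_o); tau is the number of triangles inside S *)
type_synonym 'v state = "'v set set \<times> nat \<times> nat"

definition tau :: "'v state \<Rightarrow> nat" where
  "tau st = card (triangles (fst st))"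

(* one step of TRIEST-FD; s is s^(t), the number of edges after the current operation *)
definition triest_step :: "nat \<Rightarrow> nat \<Rightarrow> 'v op \<Rightarrow> 'v state \<Rightarrow> 'v state pmf" where
  "triest_step M s x st =
    (case st of (S, di, dout) \<Rightarrow>
      (let e = op_edge x in
       if \<not> fst x then
         (if e \<in> S then return_pmf (S - {e}, Suc di, dout)
          else return_pmf (S, di, Suc dout))
       else if di + dout = 0 then
         (if card S < M then return_pmf (insert e S, di, dout)
          else do {
            b \<leftarrow> bernoulli_pmf (real M / real s);
            if b then do {
                f \<leftarrow> pmf_of_set S;
                return_pmf (insert e (S - {f}), di, dout) }
            else return_pmf (S, di, dout) })
       else do {
         b \<leftarrow> bernoulli_pmf (real di / real (di + dout));
         if b then return_pmf (insert e S, di - 1, dout)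
         else return_pmf (S, di, dout - 1) }))"

primrec triest_run :: "nat \<Rightarrow> 'v op list \<Rightarrow> nat \<Rightarrow> 'v state pmf" where
  "triest_run M \<sigma> 0 = return_pmf ({}, 0, 0)"
| "triest_run M \<sigma> (Suc t) =
     triest_run M \<sigma> t \<bind> triest_step M (card (graph_at \<sigma> (Suc t))) (\<sigma> ! t)"

(* kappa^(t); binomial coefficients with negative lower index are 0 *)
definition kappa :: "nat \<Rightarrow> nat \<Rightarrow> nat \<Rightarrow> real" where
  "kappa M s d =
    (let \<omega> = min M (s + d) in
     1 - (\<Sum>j\<in>{0..2::nat}. (if j \<le> \<omega> then real (s choose j) * real (d choose (\<omega> - j)) else 0))
           / real ((s + d) choose \<omega>))"

definition psi :: "nat \<Rightarrow> nat \<Rightarrow> nat \<Rightarrow> real" where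
  "psi a b c = real (c choose b) / real ((c - a) choose (b - a))"

definition rho :: "nat \<Rightarrow> nat \<Rightarrow> 'v state \<Rightarrow> real" where
  "rho M s st =
    (case st of (S, di, dout) \<Rightarrow>
      if card S < 3 then 0
      else real (tau st) / kappa M s (di + dout) * psi 3 (card S) s)"

end

theory Submission
  imports Defs "HOL-Combinatorics.Transposition"
begin

text \<open>The counters \<open>d\<^sub>i + d\<^sub>o\<close> add up to the number \<open>d\<close> of uncompensated deletions,
  which evolves deterministically, and so does the pool size \<open>s + d\<close>: it never decreases and
  grows only at insertions with \<open>d = 0\<close>, so it first exceeds \<open>M\<close> at the time \<open>t\<^sup>*\<close> where
  \<open>|E| = M + 1\<close>. Random pairing maintains the invariant that the sample together with \<open>d\<^sub>i\<close> is a
  uniformly random \<open>min M (s + d)\<close>-subset of the pool formed by \<open>E\<close> and \<open>d\<close> phantom edges,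
  \<open>d\<^sub>i\<close> counting the phantoms drawn: a deletion turns its edge into a phantom, a compensating
  insertion replaces a uniformly random phantom by the new edge, and an insertion without pending
  deletions is either deterministic or an instance of reservoir sampling. Before \<open>t\<^sup>*\<close> the
  sample is the whole graph and \<open>\<kappa> = \<psi> = 1\<close>, so the estimate is exact; afterwards the number
  of sampled triangles is hypergeometric, \<open>\<kappa>\<close> is the probability that the sample has at least
  three real edges, and the estimator is unbiased by Vandermonde's identity.\<close>

section \<open>Uncompensated deletions\<close>

text \<open>This is \<open>d\<^sub>i + d\<^sub>o\<close>, which does not depend on the random choices: a deletion increments
  one of the counters and an insertion decrements one of them, unless both are already \<open>0\<close>.\<close>

primrec pending_deletions :: "'v op list \<Rightarrow> nat \<Rightarrow> nat" where
  "pending_deletions \<sigma> 0 = 0"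
| "pending_deletions \<sigma> (Suc t) =
     (if fst (\<sigma> ! t) then pending_deletions \<sigma> t - 1 else Suc (pending_deletions \<sigma> t))"

definition pool_size :: "'v op list \<Rightarrow> nat \<Rightarrow> nat" where
  "pool_size \<sigma> t = card (graph_at \<sigma> t) + pending_deletions \<sigma> t"

lemma finite_graph_at: "finite (graph_at \<sigma> t)"
  by (induction t) auto

lemma graph_at_Suc_insert:
  assumes "valid_stream \<sigma>" "t < length \<sigma>" "fst (\<sigma> ! t)"
  shows "op_edge (\<sigma> ! t) \<notin> graph_at \<sigma> t"
    and "graph_at \<sigma> (Suc t) = insert (op_edge (\<sigma> ! t)) (graph_at \<sigma> t)"
  using assms by (simp_all add: valid_stream_def)

lemma graph_at_Suc_delete:
  assumes "valid_stream \<sigma>" "t < length \<sigma>" "\<not> fst (\<sigma> ! t)"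
  shows "op_edge (\<sigma> ! t) \<in> graph_at \<sigma> t"
    and "graph_at \<sigma> (Suc t) = graph_at \<sigma> t - {op_edge (\<sigma> ! t)}"
  using assms by (simp_all add: valid_stream_def)

lemma pool_size_Suc:
  assumes "valid_stream \<sigma>" "t < length \<sigma>"
  shows "pool_size \<sigma> (Suc t) = pool_size \<sigma> t \<or>
         pool_size \<sigma> (Suc t) = Suc (pool_size \<sigma> t) \<and> pending_deletions \<sigma> (Suc t) = 0"
proof (cases "fst (\<sigma> ! t)")
  case True
  with graph_at_Suc_insert[OF assms] show ?thesis
    by (cases "pending_deletions \<sigma> t") (auto simp: pool_size_def finite_graph_at)
next
  case False
  with graph_at_Suc_delete[OF assms] have "card (graph_at \<sigma> (Suc t)) = card (graph_at \<sigma> t) - 1"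
      "card (graph_at \<sigma> t) > 0"
    by (auto simp: finite_graph_at card_gt_0_iff)
  with False show ?thesis by (simp add: pool_size_def)
qed

lemma pool_size_mono:
  assumes "valid_stream \<sigma>" "t \<le> t'" "t' \<le> length \<sigma>"
  shows "pool_size \<sigma> t \<le> pool_size \<sigma> t'"
  using assms(2,3)
proof (induction t' rule: dec_induct)
  case (step n)
  then show ?case using pool_size_Suc[OF assms(1), of n] by auto
qed simp

lemma pool_size_le:
  assumes "valid_stream \<sigma>" "t \<le> length \<sigma>"
  shows "pool_size \<sigma> t \<le> t"
  using assms(2)
proof (induction t)
  case (Suc t)
  then show ?case using pool_size_Suc[OF assms(1), of t] by auto
qed (simp add: pool_size_def)

text \<open>The pool size grows only at insertions that leave no phantoms, when it equals the number
  of edges.\<close>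

lemma pool_size_exceeds:
  assumes "valid_stream \<sigma>" "t \<le> length \<sigma>" "M < pool_size \<sigma> t"
  shows "\<exists>t'. M + 1 \<le> t' \<and> t' \<le> t \<and> card (graph_at \<sigma> t') = M + 1"
  using assms(2,3)
proof (induction t)
  case (Suc t)
  show ?case
  proof (cases "M < pool_size \<sigma> t")
    case True
    with Suc show ?thesis by (auto intro: le_SucI)
  next
    case False
    with Suc pool_size_Suc[OF assms(1), of t]
    have "pool_size \<sigma> (Suc t) = M + 1" "card (graph_at \<sigma> (Suc t)) = M + 1"
      by (auto simp: pool_size_def)
    with pool_size_le[OF assms(1) Suc.prems(1)] show ?thesis by auto
  qed
qed (simp add: pool_size_def)

section \<open>Uniform samples of the pool\<close>

definition subsets_of_card :: "nat \<Rightarrow> 'a set \<Rightarrow> 'a set set" where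
  "subsets_of_card k E = {A. A \<subseteq> E \<and> card A = k}"

lemma finite_subsets_of_card: "finite E \<Longrightarrow> finite (subsets_of_card k E)"
  by (rule finite_subset[of _ "Pow E"]) (auto simp: subsets_of_card_def)

lemma card_subsets_of_card: "finite E \<Longrightarrow> card (subsets_of_card k E) = card E choose k"
  by (simp add: subsets_of_card_def n_subsets)

lemma subsets_of_card_nonempty: "finite E \<Longrightarrow> k \<le> card E \<Longrightarrow> subsets_of_card k E \<noteq> {}"
  using card_subsets_of_card[of E k] by fastforce

text \<open>The pool of random pairing consists of the edges \<open>E\<close> and \<open>d\<close> phantom edges \<open>0, \<dots>, d - 1\<close>
  standing for the uncompensated deletions. A pair \<open>(A, B)\<close> is a \<open>k\<close>-subset of the pool, split
  into its real and its phantom part; the algorithm sees \<open>A\<close> as its sample, \<open>card B\<close> as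
  \<open>d\<^sub>i\<close> and the remaining phantoms as \<open>d\<^sub>o\<close>.\<close>

definition pairing_samples :: "nat \<Rightarrow> 'a set \<Rightarrow> nat \<Rightarrow> ('a set \<times> nat set) set" where
  "pairing_samples k E d = {(A, B). A \<subseteq> E \<and> B \<subseteq> {..<d} \<and> card A + card B = k}"

definition state_of_sample :: "nat \<Rightarrow> 'a set \<times> nat set \<Rightarrow> 'a set \<times> nat \<times> nat" where
  "state_of_sample d x = (fst x, card (snd x), d - card (snd x))"

definition pairing_distr :: "nat \<Rightarrow> 'a set \<Rightarrow> nat \<Rightarrow> ('a set \<times> nat \<times> nat) pmf" where
  "pairing_distr k E d = map_pmf (state_of_sample d) (pmf_of_set (pairing_samples k E d))"

lemma finite_pairing_samples: "finite E \<Longrightarrow> finite (pairing_samples k E d)"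
  by (rule finite_subset[of _ "Pow E \<times> Pow {..<d}"]) (auto simp: pairing_samples_def)

lemma pairing_samples_nonempty:
  assumes "finite E" "k \<le> card E + d"
  shows "pairing_samples k E d \<noteq> {}"
proof -
  obtain A where "A \<subseteq> E" "card A = min k (card E)"
    using obtain_subset_with_card_n[of "min k (card E)" E] by auto
  with assms have "(A, {..<k - card A}) \<in> pairing_samples k E d"
    by (auto simp: pairing_samples_def)
  then show ?thesis by auto
qed

lemma card_phantoms_le: "(A, B) \<in> pairing_samples k E d \<Longrightarrow> card B \<le> d"
  using card_mono[of "{..<d}" B] by (auto simp: pairing_samples_def)

lemma set_pairing_distr:
  "finite E \<Longrightarrow> k \<le> card E + d \<Longrightarrow>
     set_pmf (pairing_distr k E d) = state_of_sample d ` pairing_samples k E d"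
  by (simp add: pairing_distr_def finite_pairing_samples pairing_samples_nonempty)

lemma pairing_distr_counters:
  assumes "finite E" "k \<le> card E + d" "(S, di, dout) \<in> set_pmf (pairing_distr k E d)"
  shows "di + dout = d"
  using assms by (auto simp: set_pairing_distr state_of_sample_def dest: card_phantoms_le)

lemma pairing_distr_whole_pool:
  assumes "finite E"
  shows "pairing_distr (card E + d) E d = return_pmf (E, d, 0)"
proof -
  have "x = (E, {..<d})" if "x \<in> pairing_samples (card E + d) E d" for x
  proof -
    obtain A B where x: "x = (A, B)"
      by fastforce
    with that have sub: "A \<subseteq> E" "B \<subseteq> {..<d}" and "card A + card B = card E + d"
      by (auto simp: pairing_samples_def)
    moreover have "card A \<le> card E" "card B \<le> d"
      using sub assms card_mono[of E A] card_mono[of "{..<d}" B] by auto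
    ultimately have "card A = card E" "card B = card {..<d}"
      by auto
    with sub assms show ?thesis
      by (simp add: x card_subset_eq)
  qed
  then have "pairing_samples (card E + d) E d = {(E, {..<d})}"
    by (auto simp: pairing_samples_def)
  then show ?thesis by (simp add: pairing_distr_def pmf_of_set_singleton state_of_sample_def)
qed

lemma pairing_distr_no_phantoms:
  assumes "finite E" "k \<le> card E"
  shows "pairing_distr k E 0 = map_pmf (\<lambda>A. (A, 0, 0)) (pmf_of_set (subsets_of_card k E))"
proof -
  have "pairing_samples k E 0 = (\<lambda>A. (A, {})) ` subsets_of_card k E"
    by (auto simp: pairing_samples_def subsets_of_card_def)
  then show ?thesis
    using assms unfolding pairing_distr_def
    by (simp add: map_pmf_of_set_inj[symmetric] inj_on_def finite_subsets_of_card
        subsets_of_card_nonempty pmf.map_comp o_def state_of_sample_def)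
qed

section \<open>Random pairing\<close>

definition delete_edge :: "'a \<Rightarrow> 'a set \<times> nat \<times> nat \<Rightarrow> 'a set \<times> nat \<times> nat" where
  "delete_edge e st = (case st of (S, di, dout) \<Rightarrow>
     if e \<in> S then (S - {e}, Suc di, dout) else (S, di, Suc dout))"

text \<open>A deleted edge becomes the new phantom \<open>d\<close>.\<close>

definition phantomize :: "'a \<Rightarrow> nat \<Rightarrow> 'a set \<times> nat set \<Rightarrow> 'a set \<times> nat set" where
  "phantomize e d x = (if e \<in> fst x then (fst x - {e}, insert d (snd x)) else x)"

lemma bij_betw_phantomize:
  assumes "finite E" "e \<in> E"
  shows "bij_betw (phantomize e d) (pairing_samples k E d) (pairing_samples k (E - {e}) (Suc d))"
proof (rule bij_betw_byWitness[where
      f' = "\<lambda>(A, B). if d \<in> B then (insert e A, B - {d}) else (A, B)"])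
  show "phantomize e d ` pairing_samples k E d \<subseteq> pairing_samples k (E - {e}) (Suc d)"
  proof (intro image_subsetI, clarify)
    fix A B assume "(A, B) \<in> pairing_samples k E d"
    then have "A \<subseteq> E" "B \<subseteq> {..<d}" "card A + card B = k"
      by (auto simp: pairing_samples_def)
    moreover have "finite A" "finite B" "d \<notin> B"
      using \<open>A \<subseteq> E\<close> \<open>B \<subseteq> {..<d}\<close> assms(1) finite_subset by blast+
    ultimately show "phantomize e d (A, B) \<in> pairing_samples k (E - {e}) (Suc d)"
      using card_Suc_Diff1[of A e]
      by (cases "e \<in> A") (auto simp: phantomize_def pairing_samples_def)
  qed
  show "(\<lambda>(A, B). if d \<in> B then (insert e A, B - {d}) else (A, B))
      ` pairing_samples k (E - {e}) (Suc d) \<subseteq> pairing_samples k E d"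
  proof (intro image_subsetI, clarify)
    fix A B assume "(A, B) \<in> pairing_samples k (E - {e}) (Suc d)"
    then have "A \<subseteq> E - {e}" "B \<subseteq> {..<Suc d}" "card A + card B = k"
      by (auto simp: pairing_samples_def)
    moreover have "finite A" "finite B" "e \<notin> A"
      using \<open>A \<subseteq> E - {e}\<close> \<open>B \<subseteq> {..<Suc d}\<close> assms(1) finite_subset by blast+
    ultimately show "(if d \<in> B then (insert e A, B - {d}) else (A, B)) \<in> pairing_samples k E d"
      using assms(2) card_Suc_Diff1[of B d]
      by (cases "d \<in> B") (auto simp: pairing_samples_def less_Suc_eq)
  qed
qed (auto simp: pairing_samples_def phantomize_def insert_absorb)

lemma pairing_distr_delete:
  assumes "finite E" "e \<in> E" "k \<le> card E + d"
  shows "map_pmf (delete_edge e) (pairing_distr k E d) = pairing_distr k (E - {e}) (Suc d)"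
proof -
  have "delete_edge e (state_of_sample d x) = state_of_sample (Suc d) (phantomize e d x)"
    if "x \<in> pairing_samples k E d" for x
    using that card_phantoms_le[of "fst x" "snd x"] finite_subset[of "snd x" "{..<d}"]
    by (auto simp: delete_edge_def state_of_sample_def phantomize_def pairing_samples_def
        Suc_diff_le card_insert_if)
  then have "map_pmf (delete_edge e) (pairing_distr k E d)
      = map_pmf (state_of_sample (Suc d))
          (map_pmf (phantomize e d) (pmf_of_set (pairing_samples k E d)))"
    using assms by (auto simp: pairing_distr_def pmf.map_comp finite_pairing_samples
        pairing_samples_nonempty intro!: map_pmf_cong)
  also have "\<dots> = pairing_distr k (E - {e}) (Suc d)"
    unfolding pairing_distr_def using assms
    by (subst map_pmf_of_set_bij_betw[OF bij_betw_phantomize])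
      (simp_all add: finite_pairing_samples pairing_samples_nonempty)
  finally show ?thesis .
qed

lemma map_pmf_mem_pmf_of_set:
  assumes "finite B" "B \<noteq> {}"
  shows "map_pmf (\<lambda>x. x \<in> A) (pmf_of_set B) = bernoulli_pmf (card (A \<inter> B) / card B)"
proof (rule pmf_eqI)
  fix b
  have "spmf_of_pmf (map_pmf (\<lambda>x. x \<in> A) (pmf_of_set B))
      = spmf_of_pmf (bernoulli_pmf (card (A \<inter> B) / card B))"
    using map_mem_spmf_of_set[OF assms, of A] assms
    by (simp add: spmf_of_set_def del: spmf_of_pmf_pmf_of_set)
  then show "pmf (map_pmf (\<lambda>x. x \<in> A) (pmf_of_set B)) b
      = pmf (bernoulli_pmf (card (A \<inter> B) / card B)) b"
    by (metis spmf_spmf_of_pmf)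
qed

definition compensate :: "'a \<Rightarrow> 'a set \<times> nat \<times> nat \<Rightarrow> ('a set \<times> nat \<times> nat) pmf" where
  "compensate e st = (case st of (S, di, dout) \<Rightarrow> do {
     b \<leftarrow> bernoulli_pmf (real di / real (di + dout));
     if b then return_pmf (insert e S, di - 1, dout) else return_pmf (S, di, dout - 1) })"

text \<open>The inserted edge takes the place of the phantom \<open>j\<close>, which in turn takes the place of
  the last phantom \<open>d\<close>.\<close>

definition replace_phantom :: "'a \<Rightarrow> nat \<Rightarrow> nat \<Rightarrow> 'a set \<times> nat set \<Rightarrow> 'a set \<times> nat set" where
  "replace_phantom e d j x =
     (if j \<in> snd x then insert e (fst x) else fst x, Transposition.transpose j d ` snd x - {d})"

definition restore_phantom :: "'a \<Rightarrow> nat \<Rightarrow> nat \<Rightarrow> 'a set \<times> nat set \<Rightarrow> 'a set \<times> nat set" where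
  "restore_phantom e d j x =
     (fst x - {e}, Transposition.transpose j d ` (if e \<in> fst x then insert d (snd x) else snd x))"

lemma restore_replace_phantom:
  "e \<notin> A \<Longrightarrow> restore_phantom e d j (replace_phantom e d j (A, B)) = (A, B)"
  by (cases "j \<in> B") (simp_all add: replace_phantom_def restore_phantom_def
      in_transpose_image_iff image_image insert_absorb)

lemma replace_restore_phantom:
  "d \<notin> B \<Longrightarrow> replace_phantom e d j (restore_phantom e d j (A, B)) = (A, B)"
  by (cases "e \<in> A") (simp_all add: replace_phantom_def restore_phantom_def
      in_transpose_image_iff image_image insert_absorb)

lemma card_transpose_image_Diff:
  "finite B \<Longrightarrow>
     card (Transposition.transpose j d ` B - {d}) = (if j \<in> B then card B - 1 else card B)"
  by (simp add: card_Diff_singleton_if in_transpose_image_iff card_image)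

lemma bij_betw_replace_phantom:
  assumes "finite E" "e \<notin> E" "j < Suc d"
  shows "bij_betw (replace_phantom e d j)
           (pairing_samples k E (Suc d)) (pairing_samples k (insert e E) d)"
proof (rule bij_betw_byWitness[where f' = "restore_phantom e d j"])
  show "\<forall>x\<in>pairing_samples k E (Suc d). restore_phantom e d j (replace_phantom e d j x) = x"
    using assms(2) by (fastforce simp: pairing_samples_def intro!: restore_replace_phantom)
  show "\<forall>x\<in>pairing_samples k (insert e E) d. replace_phantom e d j (restore_phantom e d j x) = x"
    by (fastforce simp: pairing_samples_def intro!: replace_restore_phantom)
  show "replace_phantom e d j ` pairing_samples k E (Suc d) \<subseteq> pairing_samples k (insert e E) d"
  proof (intro image_subsetI, clarify)
    fix A B assume "(A, B) \<in> pairing_samples k E (Suc d)"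
    then have "A \<subseteq> E" "B \<subseteq> {..<Suc d}" "card A + card B = k"
      by (auto simp: pairing_samples_def)
    moreover have "finite A" "finite B" "e \<notin> A"
      using \<open>A \<subseteq> E\<close> \<open>B \<subseteq> {..<Suc d}\<close> assms(1,2) finite_subset by blast+
    moreover have "Transposition.transpose j d ` B - {d} \<subseteq> {..<d}"
      using \<open>B \<subseteq> {..<Suc d}\<close> assms(3) by (auto simp: Transposition.transpose_def)
    ultimately show "replace_phantom e d j (A, B) \<in> pairing_samples k (insert e E) d"
      using card_Suc_Diff1[of B j]
      by (auto simp: replace_phantom_def pairing_samples_def card_transpose_image_Diff)
  qed
  show "restore_phantom e d j ` pairing_samples k (insert e E) d \<subseteq> pairing_samples k E (Suc d)"
  proof (intro image_subsetI, clarify)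
    fix A B assume "(A, B) \<in> pairing_samples k (insert e E) d"
    then have "A \<subseteq> insert e E" "B \<subseteq> {..<d}" "card A + card B = k"
      by (auto simp: pairing_samples_def)
    moreover have "finite A" "finite B" "d \<notin> B"
      using \<open>A \<subseteq> insert e E\<close> \<open>B \<subseteq> {..<d}\<close> assms(1) finite_subset by blast+
    moreover have "Transposition.transpose j d ` insert d B \<subseteq> {..<Suc d}"
      using \<open>B \<subseteq> {..<d}\<close> assms(3) by (auto simp: Transposition.transpose_def)
    ultimately show "restore_phantom e d j (A, B) \<in> pairing_samples k E (Suc d)"
      using card_Suc_Diff1[of A e]
      by (auto simp: restore_phantom_def pairing_samples_def card_image)
  qed
qed

text \<open>The coin of a compensating insertion is the event that a uniformly random phantom
  belongs to the sample.\<close>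

lemma compensate_state_of_sample:
  assumes "x \<in> pairing_samples k E (Suc d)"
  shows "compensate e (state_of_sample (Suc d) x) =
           map_pmf (\<lambda>j. state_of_sample d (replace_phantom e d j x)) (pmf_of_set {..<Suc d})"
proof -
  obtain A B where x: "x = (A, B)" and B: "B \<subseteq> {..<Suc d}"
    using assms by (cases x) (auto simp: pairing_samples_def)
  then have "finite B" "card B \<le> Suc d"
    using finite_subset card_mono[OF _ B] by auto
  define outcome where "outcome b =
      (if b then (insert e A, card B - 1, Suc d - card B) else (A, card B, d - card B))" for b
  have "compensate e (state_of_sample (Suc d) x) =
      map_pmf outcome (bernoulli_pmf (card B / Suc d))"
    using \<open>card B \<le> Suc d\<close> by (auto simp: compensate_def state_of_sample_def x outcome_def
        map_pmf_def intro!: bind_pmf_cong)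
  also have "bernoulli_pmf (card B / Suc d) = map_pmf (\<lambda>j. j \<in> B) (pmf_of_set {..<Suc d})"
    using B by (subst map_pmf_mem_pmf_of_set) (auto simp: Int_absorb2)
  also have "map_pmf outcome \<dots> =
      map_pmf (\<lambda>j. state_of_sample d (replace_phantom e d j x)) (pmf_of_set {..<Suc d})"
    unfolding pmf.map_comp
    using \<open>finite B\<close> \<open>card B \<le> Suc d\<close> card_gt_0_iff[of B]
    by (intro map_pmf_cong) (auto simp: outcome_def state_of_sample_def replace_phantom_def x
        card_transpose_image_Diff)
  finally show ?thesis .
qed

lemma pairing_distr_compensate:
  assumes "finite E" "e \<notin> E" "k \<le> card E + Suc d"
  shows "pairing_distr k E (Suc d) \<bind> compensate e = pairing_distr k (insert e E) d"
proof -
  let ?P = "pmf_of_set (pairing_samples k E (Suc d))"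
  have fin: "finite (pairing_samples k E (Suc d))" and ne: "pairing_samples k E (Suc d) \<noteq> {}"
    using assms by (simp_all add: finite_pairing_samples pairing_samples_nonempty)
  have "pairing_distr k E (Suc d) \<bind> compensate e
      = ?P \<bind> (\<lambda>x. compensate e (state_of_sample (Suc d) x))"
    by (simp add: pairing_distr_def bind_map_pmf)
  also have "\<dots> = ?P \<bind> (\<lambda>x. pmf_of_set {..<Suc d} \<bind>
                   (\<lambda>j. return_pmf (state_of_sample d (replace_phantom e d j x))))"
    using fin ne by (intro bind_pmf_cong refl) (simp add: compensate_state_of_sample map_pmf_def)
  also have "\<dots> = pmf_of_set {..<Suc d} \<bind>
      (\<lambda>j. map_pmf (state_of_sample d) (map_pmf (replace_phantom e d j) ?P))"
    by (subst bind_commute_pmf) (simp add: map_pmf_def bind_assoc_pmf bind_return_pmf)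
  also have "\<dots> = pmf_of_set {..<Suc d} \<bind> (\<lambda>j. pairing_distr k (insert e E) d)"
  proof (intro bind_pmf_cong refl)
    fix j assume "j \<in> set_pmf (pmf_of_set {..<Suc d})"
    then have "j < Suc d"
      by (subst (asm) set_pmf_of_set) auto
    then show "map_pmf (state_of_sample d) (map_pmf (replace_phantom e d j) ?P)
        = pairing_distr k (insert e E) d"
      using fin ne by (simp add: pairing_distr_def
          map_pmf_of_set_bij_betw[OF bij_betw_replace_phantom[OF assms(1,2)]])
  qed
  finally show ?thesis by simp
qed

section \<open>Reservoir sampling\<close>

definition reservoir_step :: "nat \<Rightarrow> nat \<Rightarrow> 'a \<Rightarrow> 'a set \<Rightarrow> 'a set pmf" where
  "reservoir_step M s e A = do {
     b \<leftarrow> bernoulli_pmf (M / s);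
     if b then map_pmf (\<lambda>f. insert e (A - {f})) (pmf_of_set A) else return_pmf A }"

lemma pmf_reservoir_step:
  assumes "finite A" "card A = M" "0 < M" "M \<le> s"
  shows "pmf (reservoir_step M s e A) Y =
           (card {f \<in> A. insert e (A - {f}) = Y} + real (s - M) * indicator {Y} A) / s"
proof -
  have "A \<inter> (\<lambda>f. insert e (A - {f})) -` {Y} = {f \<in> A. insert e (A - {f}) = Y}" "A \<noteq> {}"
    using assms by auto
  then have "pmf (map_pmf (\<lambda>f. insert e (A - {f})) (pmf_of_set A)) Y
      = card {f \<in> A. insert e (A - {f}) = Y} / M"
    using assms by (auto simp: pmf_map measure_pmf_of_set)
  moreover have "pmf (reservoir_step M s e A) Y
      = pmf (map_pmf (\<lambda>f. insert e (A - {f})) (pmf_of_set A)) Y * (M / s)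
        + indicator {Y} A * (1 - M / s)"
    using assms by (simp add: reservoir_step_def pmf_bind integral_bernoulli_pmf)
  ultimately have "pmf (reservoir_step M s e A) Y
      = card {f \<in> A. insert e (A - {f}) = Y} / M * (M / s) + indicator {Y} A * (1 - M / s)"
    by simp
  also have "\<dots> = (card {f \<in> A. insert e (A - {f}) = Y} + real (s - M) * indicator {Y} A) / s"
    using assms by (simp add: field_simps of_nat_diff)
  finally show ?thesis .
qed

lemma card_reservoir_replacements:
  assumes "finite E" "e \<notin> E"
  shows "(\<Sum>A\<in>subsets_of_card M E. card {f \<in> A. insert e (A - {f}) = Y}) =
           (if e \<in> Y \<and> Y \<in> subsets_of_card M (insert e E) then Suc (card E) - M else 0)"
proof -
  let ?R = "SIGMA A:subsets_of_card M E. {f \<in> A. insert e (A - {f}) = Y}"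
  have "(\<Sum>A\<in>subsets_of_card M E. card {f \<in> A. insert e (A - {f}) = Y}) = card ?R"
    using assms(1) by (intro card_SigmaI[symmetric] finite_subsets_of_card)
      (auto simp: subsets_of_card_def intro: finite_subset)
  also have "\<dots> = (if e \<in> Y \<and> Y \<in> subsets_of_card M (insert e E) then Suc (card E) - M else 0)"
  proof (cases "e \<in> Y \<and> Y \<in> subsets_of_card M (insert e E)")
    case True
    then have Y: "e \<in> Y" "Y \<subseteq> insert e E" "card Y = M"
      by (auto simp: subsets_of_card_def)
    then have "finite Y" "0 < card Y"
      using finite_subset[OF Y(2)] assms(1) by (auto simp: card_gt_0_iff)
    have "?R = (\<lambda>f. (insert f (Y - {e}), f)) ` (E - Y)"
    proof (intro equalityI subsetI)
      fix x assume "x \<in> ?R"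
      then obtain A f where "x = (A, f)" "A \<subseteq> E" "f \<in> A" "Y = insert e (A - {f})"
        by (auto simp: subsets_of_card_def)
      with assms(2) show "x \<in> (\<lambda>f. (insert f (Y - {e}), f)) ` (E - Y)"
        by (auto intro!: image_eqI[of _ _ f])
    next
      fix x assume "x \<in> (\<lambda>f. (insert f (Y - {e}), f)) ` (E - Y)"
      then obtain f where "x = (insert f (Y - {e}), f)" "f \<in> E" "f \<notin> Y"
        by auto
      with Y \<open>finite Y\<close> \<open>0 < card Y\<close> assms(2) show "x \<in> ?R"
        by (auto simp: subsets_of_card_def card_insert_if card_Diff_singleton)
    qed
    moreover have "card (E - Y) = Suc (card E) - M"
    proof -
      have "E - Y = E - (Y - {e})" "Y - {e} \<subseteq> E" "card (Y - {e}) = M - 1"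
        using Y assms(2) by auto
      then show ?thesis
        using Y \<open>finite Y\<close> \<open>0 < card Y\<close> assms(1) card_mono[of E "Y - {e}"]
        by (simp add: card_Diff_subset finite_subset)
    qed
    ultimately show ?thesis
      using True by (simp add: card_image inj_on_def)
  next
    case False
    have "?R = {}"
    proof (intro equals0I, clarify)
      fix A f assume "A \<in> subsets_of_card M E" "f \<in> A" "Y = insert e (A - {f})"
      moreover from this have "finite A" "e \<notin> A" "0 < card A"
        using assms finite_subset[of A E] by (auto simp: subsets_of_card_def card_gt_0_iff)
      ultimately have "e \<in> Y \<and> Y \<in> subsets_of_card M (insert e E)"
        by (auto simp: subsets_of_card_def)
      with False show False ..
    qed
    with False show ?thesis
      by (simp only: card.empty if_False)
  qed
  finally show ?thesis .
qed

lemma reservoir_sampling: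
  assumes "finite E" "e \<notin> E" "0 < M" "M \<le> card E"
  shows "pmf_of_set (subsets_of_card M E) \<bind> reservoir_step M (Suc (card E)) e
           = pmf_of_set (subsets_of_card M (insert e E))"
proof (rule pmf_eqI)
  fix Y
  let ?S = "subsets_of_card M E" and ?s = "Suc (card E)"
  have fin: "finite ?S" and ne: "?S \<noteq> {}"
    using assms by (simp_all add: finite_subsets_of_card subsets_of_card_nonempty)
  have split: "indicator (subsets_of_card M (insert e E)) Y =
      (if e \<in> Y \<and> Y \<in> subsets_of_card M (insert e E) then 1 else 0) + (indicator ?S Y :: real)"
    using assms(2) by (auto simp: subsets_of_card_def indicator_def subset_insert)
  have "(\<Sum>A\<in>?S. pmf (reservoir_step M ?s e A) Y)
      = (\<Sum>A\<in>?S. card {f \<in> A. insert e (A - {f}) = Y} + real (?s - M) * indicator {Y} A) / ?s"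
    using assms finite_subset[of _ E] by (auto simp: sum_divide_distrib subsets_of_card_def
        pmf_reservoir_step intro!: sum.cong)
  also have "\<dots> = (real (\<Sum>A\<in>?S. card {f \<in> A. insert e (A - {f}) = Y})
      + real (?s - M) * (\<Sum>A\<in>?S. indicator {Y} A)) / ?s"
    by (simp add: sum.distrib sum_distrib_left)
  also have "(\<Sum>A\<in>?S. indicator {Y} A) = (indicator ?S Y :: real)"
    using fin by (simp add: indicator_def of_bool_def sum.delta sum.delta' eq_commute)
  also have "(real (\<Sum>A\<in>?S. card {f \<in> A. insert e (A - {f}) = Y})
        + real (?s - M) * indicator ?S Y) / ?s
      = real (?s - M) * indicator (subsets_of_card M (insert e E)) Y / ?s"
    unfolding card_reservoir_replacements[OF assms(1,2)] split by (simp add: algebra_simps)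
  finally have "pmf (pmf_of_set ?S \<bind> reservoir_step M ?s e) Y
      = real (?s - M) * indicator (subsets_of_card M (insert e E)) Y / (?s * (card E choose M))"
    using fin ne by (simp add: pmf_bind_pmf_of_set card_subsets_of_card assms(1) ring_distribs)
  also have "real (?s * (card E choose M)) = (?s - M) * (?s choose M)"
    using binomial_absorb_comp[of ?s M] by (metis diff_Suc_1)
  finally show "pmf (pmf_of_set ?S \<bind> reservoir_step M ?s e) Y =
      pmf (pmf_of_set (subsets_of_card M (insert e E))) Y"
    using assms by (simp add: card_subsets_of_card finite_subsets_of_card subsets_of_card_nonempty)
qed

section \<open>The distribution of the state of TRIEST-FD\<close>

lemma triest_step_delete:
  "\<not> fst x \<Longrightarrow> triest_step M s x st = return_pmf (delete_edge (op_edge x) st)"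
  by (cases st) (simp add: triest_step_def delete_edge_def Let_def)

lemma triest_step_compensate:
  "fst x \<Longrightarrow> di + dout \<noteq> 0 \<Longrightarrow>
     triest_step M s x (S, di, dout) = compensate (op_edge x) (S, di, dout)"
  by (auto simp: triest_step_def compensate_def Let_def)

lemma triest_step_fill:
  "fst x \<Longrightarrow> card S < M \<Longrightarrow>
     triest_step M s x (S, 0, 0) = return_pmf (insert (op_edge x) S, 0, 0)"
  by (simp add: triest_step_def Let_def)

lemma triest_step_reservoir:
  "fst x \<Longrightarrow> card S = M \<Longrightarrow>
     triest_step M s x (S, 0, 0) = map_pmf (\<lambda>A. (A, 0, 0)) (reservoir_step M s (op_edge x) S)"
  by (auto simp: triest_step_def Let_def reservoir_step_def map_bind_pmf pmf.map_comp o_def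
      map_pmf_def[of _ "pmf_of_set S"] intro!: bind_pmf_cong)

lemma pairing_distr_bind_delete:
  assumes "\<not> fst x" "finite E" "op_edge x \<in> E" "k \<le> card E + d"
  shows "pairing_distr k E d \<bind> triest_step M s x = pairing_distr k (E - {op_edge x}) (Suc d)"
proof -
  have "triest_step M s x = (\<lambda>st. return_pmf (delete_edge (op_edge x) st))"
    using assms(1) by (simp add: fun_eq_iff triest_step_delete)
  then show ?thesis
    using assms(2-) by (simp add: pairing_distr_delete flip: map_pmf_def)
qed

lemma pairing_distr_bind_compensate:
  assumes "fst x" "finite E" "op_edge x \<notin> E" "k \<le> card E + Suc d"
  shows "pairing_distr k E (Suc d) \<bind> triest_step M s x = pairing_distr k (insert (op_edge x) E) d"
proof -
  have "pairing_distr k E (Suc d) \<bind> triest_step M s x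
      = pairing_distr k E (Suc d) \<bind> compensate (op_edge x)"
  proof (intro bind_pmf_cong refl, clarify)
    fix S di dout assume "(S, di, dout) \<in> set_pmf (pairing_distr k E (Suc d))"
    with assms(2,4) have "di + dout = Suc d"
      by (rule pairing_distr_counters)
    with assms(1) show "triest_step M s x (S, di, dout) = compensate (op_edge x) (S, di, dout)"
      by (simp add: triest_step_compensate)
  qed
  with assms(2-) show ?thesis
    by (simp add: pairing_distr_compensate)
qed

lemma pairing_distr_bind_fill:
  assumes "fst x" "finite E" "op_edge x \<notin> E" "card E < M"
  shows "pairing_distr (card E) E 0 \<bind> triest_step M s x
           = pairing_distr (card (insert (op_edge x) E)) (insert (op_edge x) E) 0"
  using assms pairing_distr_whole_pool[of E 0] pairing_distr_whole_pool[of "insert (op_edge x) E" 0]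
  by (simp add: bind_return_pmf triest_step_fill)

lemma pairing_distr_bind_reservoir:
  assumes "fst x" "finite E" "op_edge x \<notin> E" "0 < M" "M \<le> card E"
  shows "pairing_distr M E 0 \<bind> triest_step M (Suc (card E)) x
           = pairing_distr M (insert (op_edge x) E) 0"
proof -
  let ?S = "subsets_of_card M E"
  have "finite ?S" "?S \<noteq> {}"
    using assms by (simp_all add: finite_subsets_of_card subsets_of_card_nonempty)
  have "pairing_distr M E 0 \<bind> triest_step M (Suc (card E)) x
      = pmf_of_set ?S \<bind> (\<lambda>A. triest_step M (Suc (card E)) x (A, 0, 0))"
    using assms by (simp add: pairing_distr_no_phantoms bind_map_pmf)
  also have "\<dots> = pmf_of_set ?S \<bind>
      (\<lambda>A. map_pmf (\<lambda>A. (A, 0, 0)) (reservoir_step M (Suc (card E)) (op_edge x) A))"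
    using assms \<open>finite ?S\<close> \<open>?S \<noteq> {}\<close>
    by (intro bind_pmf_cong refl) (simp add: triest_step_reservoir subsets_of_card_def)
  also have "\<dots> = map_pmf (\<lambda>A. (A, 0, 0)) (pmf_of_set (subsets_of_card M (insert (op_edge x) E)))"
    using assms by (simp add: reservoir_sampling flip: map_bind_pmf)
  also have "\<dots> = pairing_distr M (insert (op_edge x) E) 0"
    using assms by (simp add: pairing_distr_no_phantoms)
  finally show ?thesis .
qed

lemma pairing_distr_triest_step:
  fixes d :: nat
  assumes "finite E" "0 < M"
    and valid: "fst x \<Longrightarrow> op_edge x \<notin> E" "\<not> fst x \<Longrightarrow> op_edge x \<in> E"
  defines "E' \<equiv> if fst x then insert (op_edge x) E else E - {op_edge x}"
    and "d' \<equiv> if fst x then d - 1 else Suc d"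
  shows "pairing_distr (min M (card E + d)) E d \<bind> triest_step M (card E') x
           = pairing_distr (min M (card E' + d')) E' d'"
proof -
  consider (delete) "\<not> fst x"
    | (compensate) d0 where "fst x" "d = Suc d0"
    | (fill) "fst x" "d = 0" "card E < M"
    | (reservoir) "fst x" "d = 0" "M \<le> card E"
    by (cases d) force+
  then show ?thesis
  proof cases
    case delete
    with assms(1) valid have "0 < card E"
      by (auto simp: card_gt_0_iff)
    with delete assms(1) valid have "card E' + d' = card E + d"
      by (simp add: E'_def d'_def)
    with delete assms(1) valid show ?thesis
      by (simp add: pairing_distr_bind_delete E'_def d'_def)
  next
    case compensate
    with assms(1) valid show ?thesis
      by (simp add: pairing_distr_bind_compensate E'_def d'_def)
  next
    case fill
    with assms(1) valid show ?thesis
      by (simp add: pairing_distr_bind_fill E'_def d'_def)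
  next
    case reservoir
    with assms valid show ?thesis
      by (simp add: pairing_distr_bind_reservoir E'_def d'_def)
  qed
qed

lemma triest_run_eq_pairing_distr:
  fixes \<sigma> :: "'v op list"
  assumes "valid_stream \<sigma>" "0 < M" "t \<le> length \<sigma>"
  shows "triest_run M \<sigma> t =
           pairing_distr (min M (pool_size \<sigma> t)) (graph_at \<sigma> t) (pending_deletions \<sigma> t)"
  using assms(3)
proof (induction t)
  case 0
  show ?case
    using pairing_distr_whole_pool[of "{} :: 'v set set" 0] by (simp add: pool_size_def)
next
  case (Suc t)
  then have "t < length \<sigma>"
    by simp
  then have valid: "fst (\<sigma> ! t) \<Longrightarrow> op_edge (\<sigma> ! t) \<notin> graph_at \<sigma> t"
      "\<not> fst (\<sigma> ! t) \<Longrightarrow> op_edge (\<sigma> ! t) \<in> graph_at \<sigma> t"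
    using graph_at_Suc_insert graph_at_Suc_delete assms(1) by blast+
  have IH: "triest_run M \<sigma> t = pairing_distr
      (min M (card (graph_at \<sigma> t) + pending_deletions \<sigma> t)) (graph_at \<sigma> t) (pending_deletions \<sigma> t)"
    using Suc by (simp add: pool_size_def)
  show ?case
    unfolding triest_run.simps IH pool_size_def graph_at.simps(2) pending_deletions.simps(2)
    by (rule pairing_distr_triest_step[OF finite_graph_at assms(2)]) (fact valid(1), fact valid(2))
qed

section \<open>Unbiasedness of the estimator\<close>

lemma card_triangle:
  assumes "T \<in> triangles E"
  shows "card T = 3"
proof -
  obtain u v w where "u \<noteq> v" "v \<noteq> w" "w \<noteq> u" and T: "T = {{u, v}, {v, w}, {w, u}}"
    using assms unfolding triangles_def by blast
  then have "{u, v} \<noteq> {v, w}" "{u, v} \<noteq> {w, u}" "{v, w} \<noteq> {w, u}"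
    by (auto simp: doubleton_eq_iff)
  then show ?thesis
    by (simp add: T)
qed

lemma triangles_eq: "triangles E = {T \<in> triangles UNIV. T \<subseteq> E}"
  unfolding triangles_def by auto

lemma triangles_subgraph: "A \<subseteq> E \<Longrightarrow> triangles A = {T \<in> triangles E. T \<subseteq> A}"
  by (subst (1 2) triangles_eq) blast

lemma triangles_subset_Pow: "triangles E \<subseteq> Pow E"
  by (subst triangles_eq) blast

lemma triangles_empty_if_card_less_3:
  assumes "finite E" "card E < 3"
  shows "triangles E = {}"
proof (rule ccontr)
  assume "triangles E \<noteq> {}"
  then obtain T where T: "T \<in> triangles E"
    by blast
  then have "T \<subseteq> E"
    using triangles_subset_Pow by blast
  then have "card T \<le> card E"
    using assms(1) by (rule card_mono[rotated])
  with card_triangle[OF T] assms(2) show False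
    by simp
qed

lemma rho_whole_graph:
  assumes "finite E" "card E + d \<le> M"
  shows "rho M (card E) (E, d, 0) = card (triangles E)"
proof (cases "card E < 3")
  case True
  then show ?thesis
    using triangles_empty_if_card_less_3[OF assms(1)] by (simp add: rho_def)
next
  case False
  text \<open>At most two real edges cannot be completed by the \<open>d\<close> phantoms to the whole pool.\<close>
  have "(\<Sum>j\<in>{0..2::nat}. if j \<le> card E + d
      then real (card E choose j) * real (d choose (card E + d - j)) else 0) = 0"
    using False by (intro sum.neutral ballI) (simp add: binomial_eq_0)
  then have "kappa M (card E) d = 1"
    using assms(2) by (simp add: kappa_def Let_def min_absorb2)
  with False show ?thesis
    by (simp add: rho_def tau_def psi_def)
qed

lemma card_supersets_in_subsets_of_card:
  assumes "finite E" "T \<subseteq> E" "card T \<le> m"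
  shows "card {A \<in> subsets_of_card m E. T \<subseteq> A} = (card E - card T) choose (m - card T)"
proof -
  have "finite T"
    using assms(1,2) by (rule finite_subset[rotated])
  have "bij_betw (\<lambda>A. A - T)
      {A \<in> subsets_of_card m E. T \<subseteq> A} (subsets_of_card (m - card T) (E - T))"
  proof (rule bij_betw_byWitness[where f' = "\<lambda>B. B \<union> T"])
    show "(\<lambda>A. A - T) ` {A \<in> subsets_of_card m E. T \<subseteq> A} \<subseteq> subsets_of_card (m - card T) (E - T)"
      using \<open>finite T\<close> by (auto simp: subsets_of_card_def card_Diff_subset)
    show "(\<lambda>B. B \<union> T) ` subsets_of_card (m - card T) (E - T) \<subseteq> {A \<in> subsets_of_card m E. T \<subseteq> A}"
    proof (intro image_subsetI)
      fix B assume "B \<in> subsets_of_card (m - card T) (E - T)"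
      then have "B \<subseteq> E - T" "card B = m - card T" "finite B" "B \<inter> T = {}"
        using assms(1) finite_subset[of B E] by (auto simp: subsets_of_card_def)
      with assms \<open>finite T\<close> show "B \<union> T \<in> {A \<in> subsets_of_card m E. T \<subseteq> A}"
        by (auto simp: subsets_of_card_def card_Un_disjoint)
    qed
  qed (auto simp: subsets_of_card_def)
  then show ?thesis
    using assms \<open>finite T\<close> by (simp add: bij_betw_same_card card_subsets_of_card card_Diff_subset)
qed

lemma sum_card_triangles_subsets_of_card:
  assumes "finite E" "3 \<le> m"
  shows "(\<Sum>A\<in>subsets_of_card m E. card (triangles A)) =
           card (triangles E) * ((card E - 3) choose (m - 3))"
proof -
  have fin: "finite (triangles E)"
    using assms(1) by (intro finite_subset[OF triangles_subset_Pow]) simp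
  have "(\<Sum>A\<in>subsets_of_card m E. card (triangles A))
      = (\<Sum>A\<in>subsets_of_card m E. \<Sum>T\<in>{T. T \<in> triangles E \<and> T \<subseteq> A}. 1)"
    by (intro sum.cong) (auto simp: subsets_of_card_def triangles_subgraph)
  also have "\<dots> = (\<Sum>T\<in>triangles E. \<Sum>A\<in>{A. A \<in> subsets_of_card m E \<and> T \<subseteq> A}. 1)"
    using assms(1) fin by (intro sum.swap_restrict) (simp_all add: finite_subsets_of_card)
  also have "\<dots> = (\<Sum>T\<in>triangles E. (card E - 3) choose (m - 3))"
  proof (intro sum.cong refl)
    fix T assume "T \<in> triangles E"
    then have "T \<subseteq> E" "card T = 3"
      using triangles_subset_Pow card_triangle by blast+
    with assms show "(\<Sum>A\<in>{A. A \<in> subsets_of_card m E \<and> T \<subseteq> A}. 1) = (card E - 3) choose (m - 3)"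
      by (simp add: card_supersets_in_subsets_of_card)
  qed
  finally show ?thesis
    by simp
qed

lemma binomial_mult_psi_3:
  assumes "3 \<le> m"
  shows "real ((s - 3) choose (m - 3)) * psi 3 m s = real (s choose m)"
proof (cases "m \<le> s")
  case True
  then have "(s - 3) choose (m - 3) \<noteq> 0"
    using assms by simp
  then show ?thesis
    by (simp add: psi_def)
next
  case False
  then show ?thesis
    by (simp add: psi_def)
qed

lemma sum_subsets_of_card_scaled_triangles:
  assumes "finite E" "3 \<le> m"
  shows "(\<Sum>A\<in>subsets_of_card m E. card (triangles A) * psi 3 m (card E))
           = card (triangles E) * real (card E choose m)"
  using sum_card_triangles_subsets_of_card[OF assms] binomial_mult_psi_3[OF assms(2), of "card E"]
  by (simp flip: sum_distrib_right of_nat_sum)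

lemma sum_pairing_samples:
  fixes f :: "'a set \<Rightarrow> 'b :: comm_semiring_1"
  assumes "finite E"
  shows "(\<Sum>x\<in>pairing_samples k E d. f (fst x))
           = (\<Sum>m\<le>k. of_nat (d choose (k - m)) * (\<Sum>A\<in>subsets_of_card m E. f A))"
proof -
  let ?W = "{A. A \<subseteq> E \<and> card A \<le> k}"
  have fin: "finite ?W"
    using assms by (auto intro: finite_subset[of _ "Pow E"])
  have "pairing_samples k E d = (SIGMA A:?W. subsets_of_card (k - card A) {..<d})"
    by (auto simp: pairing_samples_def subsets_of_card_def)
  then have "(\<Sum>x\<in>pairing_samples k E d. f (fst x))
      = (\<Sum>A\<in>?W. \<Sum>B\<in>subsets_of_card (k - card A) {..<d}. f A)"
    using sum.Sigma[OF fin, of "\<lambda>A. subsets_of_card (k - card A) {..<d}" "\<lambda>A B. f A"]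
    by (simp add: finite_subsets_of_card split_def)
  also have "\<dots> = (\<Sum>A\<in>?W. of_nat (d choose (k - card A)) * f A)"
    by (simp add: card_subsets_of_card)
  also have "\<dots> = (\<Sum>m\<le>k. \<Sum>A\<in>{A \<in> ?W. card A = m}. of_nat (d choose (k - card A)) * f A)"
    using fin by (intro sum.group[symmetric]) auto
  also have "\<dots> = (\<Sum>m\<le>k. of_nat (d choose (k - m)) * (\<Sum>A\<in>subsets_of_card m E. f A))"
    by (intro sum.cong refl) (auto simp: subsets_of_card_def sum_distrib_left intro!: sum.cong)
  finally show ?thesis .
qed

lemma card_pairing_samples:
  "finite E \<Longrightarrow> card (pairing_samples k E d) = (card E + d) choose k"
  using sum_pairing_samples[where f = "\<lambda>_. 1 :: nat" and E = E and k = k and d = d]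
  by (simp add: card_subsets_of_card mult.commute flip: vandermonde)

lemma kappa_mult_binomial:
  assumes "3 \<le> k" "k \<le> s + d"
  shows "kappa k s d * real ((s + d) choose k)
           = (\<Sum>m\<in>{3..k}. real (s choose m) * real (d choose (k - m)))"
proof -
  let ?a = "\<lambda>m. real (s choose m) * real (d choose (k - m))"
  have "{..k} = {0..2} \<union> {3..k}"
    using assms(1) by auto
  then have "real ((s + d) choose k) = sum ?a {0..2} + sum ?a {3..k}"
    by (simp flip: vandermonde add: sum.union_disjoint)
  moreover have "kappa k s d = 1 - sum ?a {0..2} / real ((s + d) choose k)"
    using assms by (simp add: kappa_def Let_def)
  moreover have "real ((s + d) choose k) > 0"
    using assms(2) by simp
  ultimately show ?thesis
    by (simp add: field_simps)
qed

lemma kappa_pos: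
  assumes "3 \<le> k" "k \<le> s + d" "3 \<le> s"
  shows "0 < kappa k s d"
proof -
  let ?m = "min s k"
  have "0 < real (s choose ?m) * real (d choose (k - ?m))"
    using assms by (auto simp: min_def)
  also have "\<dots> \<le> (\<Sum>m\<in>{3..k}. real (s choose m) * real (d choose (k - m)))"
    using assms by (intro member_le_sum) auto
  also have "\<dots> = kappa k s d * real ((s + d) choose k)"
    using assms by (simp add: kappa_mult_binomial)
  finally show ?thesis
    by (simp add: zero_less_mult_iff)
qed

lemma expectation_rho_pairing_distr:
  fixes E :: "'v set set"
  assumes "finite E" "3 \<le> M" "M \<le> card E + d"
  shows "measure_pmf.expectation (pairing_distr M E d) (rho M (card E)) = card (triangles E)"
proof -
  let ?s = "card E" and ?\<kappa> = "kappa M (card E) d" and ?\<Delta> = "real (card (triangles E))"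
  let ?P = "pairing_samples M E d"
  define estimate where "estimate A =
      (if card A < 3 then 0 else real (card (triangles A)) / ?\<kappa> * psi 3 (card A) ?s)"
    for A :: "'v set set"
  have layer: "real (d choose (M - m)) * (\<Sum>A\<in>subsets_of_card m E. estimate A)
      = (if 3 \<le> m then ?\<Delta> / ?\<kappa> * (real (?s choose m) * real (d choose (M - m))) else 0)" for m
  proof (cases "3 \<le> m")
    case True
    have "(\<Sum>A\<in>subsets_of_card m E. estimate A)
        = (\<Sum>A\<in>subsets_of_card m E. card (triangles A) * psi 3 m ?s) / ?\<kappa>"
      using True
      by (auto simp: estimate_def subsets_of_card_def sum_divide_distrib intro!: sum.cong)
    with True show ?thesis
      using sum_subsets_of_card_scaled_triangles[OF assms(1) True] by simp
  qed (auto simp: estimate_def subsets_of_card_def)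
  have "measure_pmf.expectation (pairing_distr M E d) (rho M ?s)
      = (\<Sum>x\<in>?P. rho M ?s (state_of_sample d x)) / card ?P"
    using assms by (simp add: pairing_distr_def integral_pmf_of_set finite_pairing_samples
        pairing_samples_nonempty)
  also have "(\<Sum>x\<in>?P. rho M ?s (state_of_sample d x)) = (\<Sum>x\<in>?P. estimate (fst x))"
    by (intro sum.cong refl) (auto simp: rho_def tau_def state_of_sample_def estimate_def
        dest: card_phantoms_le)
  also have "\<dots> = (\<Sum>m\<le>M. real (d choose (M - m)) * (\<Sum>A\<in>subsets_of_card m E. estimate A))"
    using assms(1) by (rule sum_pairing_samples)
  also have "\<dots> = (\<Sum>m\<in>{3..M}. ?\<Delta> / ?\<kappa> * (real (?s choose m) * real (d choose (M - m))))"
    unfolding layer by (subst sum.inter_filter[symmetric]) (auto intro!: sum.cong)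
  also have "\<dots> = ?\<Delta> / ?\<kappa> * (?\<kappa> * real ((?s + d) choose M))"
    using assms by (simp add: sum_distrib_left kappa_mult_binomial)
  finally show ?thesis
    using assms kappa_pos[OF assms(2,3)] triangles_empty_if_card_less_3[OF assms(1)]
    by (cases "?s < 3") (simp_all add: card_pairing_samples)
qed

theorem theorem4p16:
  fixes M :: nat and \<sigma> :: "'v op list"
  assumes "M \<ge> 6" and "valid_stream \<sigma>"
  shows "\<forall>t. 1 \<le> t \<and> t \<le> length \<sigma> \<longrightarrow>
           ((\<forall>t'. M + 1 \<le> t' \<and> t' \<le> t \<longrightarrow> card (graph_at \<sigma> t') \<noteq> M + 1) \<longrightarrow>
              (\<forall>st \<in> set_pmf (triest_run M \<sigma> t).
                 rho M (card (graph_at \<sigma> t)) st = real (card (triangles (graph_at \<sigma> t))))) \<and>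
           ((\<exists>t'. M + 1 \<le> t' \<and> t' \<le> t \<and> card (graph_at \<sigma> t') = M + 1) \<longrightarrow>
              measure_pmf.expectation (triest_run M \<sigma> t) (rho M (card (graph_at \<sigma> t)))
                = real (card (triangles (graph_at \<sigma> t))))"
proof (intro allI impI, goal_cases)
  case (1 t)
  let ?E = "graph_at \<sigma> t" and ?d = "pending_deletions \<sigma> t"
  have run: "triest_run M \<sigma> t = pairing_distr (min M (card ?E + ?d)) ?E ?d"
    using triest_run_eq_pairing_distr[OF assms(2)] assms(1) 1 by (simp add: pool_size_def)
  have hit: "(\<exists>t'. M + 1 \<le> t' \<and> t' \<le> t \<and> card (graph_at \<sigma> t') = M + 1) \<longleftrightarrow> M < card ?E + ?d"
    using pool_size_exceeds[OF assms(2)] pool_size_mono[OF assms(2)] 1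
    by (fastforce simp: pool_size_def)
  show ?case
  proof (cases "M < card ?E + ?d")
    case True
    with run assms(1) have "measure_pmf.expectation (triest_run M \<sigma> t) (rho M (card ?E))
        = real (card (triangles ?E))"
      by (simp add: expectation_rho_pairing_distr finite_graph_at)
    with True hit show ?thesis
      by blast
  next
    case False
    with run have "triest_run M \<sigma> t = return_pmf (?E, ?d, 0)"
      by (simp add: pairing_distr_whole_pool finite_graph_at)
    with False hit show ?thesis
      by (simp add: rho_whole_graph finite_graph_at)
  qed
qed

end
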